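(* Let $\gamma(s)$ be a proper triharmonic curve immersed in a 3-dimensional space form $M^3(\rho)$. Then $\gamma$ has constant curvature if and only if it has constant torsion.
   Context: $M^3(\rho)$ is a 3-dimensional Riemannian manifold of constant sectional curvature $\rho$. For an arc-length parametrized curve $\gamma$ in a Riemannian manifold $M$ with Levi-Civita connection $\nabla$, curvature tensor $R^M(X,Y)=\nabla_X\nabla_Y-\nabla_Y\nabla_X-\nabla_{[X,Y]}$ and $T=\gamma'$, $\gamma$ is triharmonic if $\nabla_T^5T+R^M(\nabla_T^3T,T)T-R^M(\nabla_T^2T,\nabla_TT)T=0$; proper triharmonic means triharmonic and not a geodesic. Curvature $\kappa$ and torsion $\tau$ are defined by the Frenet equations $\nabla_TT=\kappa N$, $\nabla_TN=-\kappa T+\tau B$, $\nabla_TB=-\tau N$. *)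

theory Defs
  imports "HOL-Analysis.Analysis"
begin

text \<open>Concrete models of the 3-dimensional space form M^3(rho), realised as a
hypersurface of R^4 (coordinates 1..4):
 rho > 0: round sphere {x. <x,x> = 1/rho} in Euclidean R^4;
 rho = 0: the hyperplane {x. x4 = 0} of Euclidean R^4 (i.e. R^3);
 rho < 0: hyperboloid {x. <x,x>_L = 1/rho, x4 > 0} in Minkowski R^{3,1}.\<close>

definition amb :: "real \<Rightarrow> real^4 \<Rightarrow> real^4 \<Rightarrow> real" where
  "amb \<rho> x y = x$1*y$1 + x$2*y$2 + x$3*y$3 + (if \<rho> < 0 then -1 else 1) * (x$4*y$4)"

definition space_form :: "real \<Rightarrow> (real^4) set" where
  "space_form \<rho> =
     (if \<rho> > 0 then {x. amb \<rho> x x = 1/\<rho>}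
      else if \<rho> = 0 then {x. x$4 = 0}
      else {x. amb \<rho> x x = 1/\<rho> \<and> x$4 > 0})"

text \<open>Levi-Civita covariant derivative along a curve gamma in space_form rho of a
vector field V along gamma: tangential projection of the ambient derivative,
which equals V' + rho <gamma', V> gamma.\<close>

definition covD :: "real \<Rightarrow> (real \<Rightarrow> real^4) \<Rightarrow> (real \<Rightarrow> real^4) \<Rightarrow> real \<Rightarrow> real^4" where
  "covD \<rho> \<gamma> V s = vector_derivative V (at s)
      + (\<rho> * amb \<rho> (vector_derivative \<gamma> (at s)) (V s)) *\<^sub>R \<gamma> s"

definition tangent :: "(real \<Rightarrow> real^4) \<Rightarrow> real \<Rightarrow> real^4" where
  "tangent \<gamma> s = vector_derivative \<gamma> (at s)"

fun covT :: "real \<Rightarrow> (real \<Rightarrow> real^4) \<Rightarrow> nat \<Rightarrow> real \<Rightarrow> real^4" where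
  "covT \<rho> \<gamma> 0 = tangent \<gamma>"
| "covT \<rho> \<gamma> (Suc k) = covD \<rho> \<gamma> (covT \<rho> \<gamma> k)"

text \<open>Curvature tensor of a space of constant sectional curvature rho, with the
convention R(X,Y) = [nabla_X, nabla_Y] - nabla_[X,Y]:
R(X,Y)Z = rho (<Y,Z> X - <X,Z> Y).\<close>
definition curvR :: "real \<Rightarrow> real^4 \<Rightarrow> real^4 \<Rightarrow> real^4 \<Rightarrow> real^4" where
  "curvR \<rho> X Y Z = \<rho> *\<^sub>R (amb \<rho> Y Z *\<^sub>R X - amb \<rho> X Z *\<^sub>R Y)"

definition triharmonic_on :: "real \<Rightarrow> real set \<Rightarrow> (real \<Rightarrow> real^4) \<Rightarrow> bool" where
  "triharmonic_on \<rho> I \<gamma> \<longleftrightarrow>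
     (\<forall>s\<in>I. covT \<rho> \<gamma> 5 s
        + curvR \<rho> (covT \<rho> \<gamma> 3 s) (covT \<rho> \<gamma> 0 s) (covT \<rho> \<gamma> 0 s)
        - curvR \<rho> (covT \<rho> \<gamma> 2 s) (covT \<rho> \<gamma> 1 s) (covT \<rho> \<gamma> 0 s) = 0)"

definition geodesic_on :: "real \<Rightarrow> real set \<Rightarrow> (real \<Rightarrow> real^4) \<Rightarrow> bool" where
  "geodesic_on \<rho> I \<gamma> \<longleftrightarrow> (\<forall>s\<in>I. covT \<rho> \<gamma> 1 s = 0)"

definition proper_triharmonic_on :: "real \<Rightarrow> real set \<Rightarrow> (real \<Rightarrow> real^4) \<Rightarrow> bool" where
  "proper_triharmonic_on \<rho> I \<gamma> \<longleftrightarrow> triharmonic_on \<rho> I \<gamma> \<and> \<not> geodesic_on \<rho> I \<gamma>"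

definition smooth_on :: "real set \<Rightarrow> (real \<Rightarrow> real^4) \<Rightarrow> bool" where
  "smooth_on I f \<longleftrightarrow> (\<exists>D::nat \<Rightarrow> real \<Rightarrow> real^4. D 0 = f \<and>
      (\<forall>k. \<forall>s\<in>I. (D k has_vector_derivative D (Suc k) s) (at s)))"

definition unit_speed_curve_in :: "real \<Rightarrow> real set \<Rightarrow> (real \<Rightarrow> real^4) \<Rightarrow> bool" where
  "unit_speed_curve_in \<rho> I \<gamma> \<longleftrightarrow> smooth_on I \<gamma> \<and>
     (\<forall>s\<in>I. \<gamma> s \<in> space_form \<rho> \<and> amb \<rho> (tangent \<gamma> s) (tangent \<gamma> s) = 1)"

text \<open>A Frenet frame (T,N,B) along gamma with curvature kappa > 0 and torsion tau:
(T,N,B) orthonormal and tangent to M^3(rho) (tangent vectors v at p satisfy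
<p,v> = 0 if rho /= 0, v4 = 0 if rho = 0), and the Frenet equations hold.\<close>
definition tangent_vec :: "real \<Rightarrow> real^4 \<Rightarrow> real^4 \<Rightarrow> bool" where
  "tangent_vec \<rho> p v \<longleftrightarrow> (if \<rho> = 0 then v$4 = 0 else amb \<rho> p v = 0)"

definition frenet_on :: "real \<Rightarrow> real set \<Rightarrow> (real \<Rightarrow> real^4) \<Rightarrow> (real \<Rightarrow> real)
    \<Rightarrow> (real \<Rightarrow> real) \<Rightarrow> (real \<Rightarrow> real^4) \<Rightarrow> (real \<Rightarrow> real^4) \<Rightarrow> bool" where
  "frenet_on \<rho> I \<gamma> \<kappa> \<tau> N B \<longleftrightarrow>
     (\<forall>s\<in>I. N differentiable (at s) \<and> B differentiable (at s) \<and> \<kappa> s > 0 \<and>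
        tangent_vec \<rho> (\<gamma> s) (N s) \<and> tangent_vec \<rho> (\<gamma> s) (B s) \<and>
        amb \<rho> (N s) (N s) = 1 \<and> amb \<rho> (B s) (B s) = 1 \<and>
        amb \<rho> (tangent \<gamma> s) (N s) = 0 \<and> amb \<rho> (tangent \<gamma> s) (B s) = 0 \<and>
        amb \<rho> (N s) (B s) = 0 \<and>
        covD \<rho> \<gamma> (tangent \<gamma>) s = \<kappa> s *\<^sub>R N s \<and>
        covD \<rho> \<gamma> N s = - \<kappa> s *\<^sub>R tangent \<gamma> s + \<tau> s *\<^sub>R B s \<and>
        covD \<rho> \<gamma> B s = - \<tau> s *\<^sub>R N s)"

end

(*
  Write nabla^k T for the iterated covariant derivatives of T along the curve; metric
  compatibility gives <nabla^i T, nabla^j T>' = <nabla^(i+1) T, nabla^j T> + <nabla^i T, nabla^(j+1) T>.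

  If kappa is constant, differentiating the Gram functions <nabla^i T, nabla^j T>
  starting from |T| = 1 and |nabla T| = kappa gives <nabla^5 T, T> = 5 <nabla^2 T, nabla^3 T>,
  while the curvature terms of the triharmonic equation are orthogonal to T. Hence
  |nabla^2 T|^2 = kappa^2 (kappa^2 + tau^2) is constant, and tau, being continuous with
  constant square, is constant.

  If tau = c is constant, the T, N, B components of the triharmonic equation are ODEs for
  kappa. On the open set where kappa' <> 0 they force kappa^2 to be a root of a fixed
  nonzero polynomial: for c <> 0 this takes two differentiations, for c = 0 one uses a first
  integral and eliminates kappa' between two algebraic relations. So kappa^2 is locally
  constant there, contradicting kappa' <> 0; hence kappa' = 0 everywhere.
*)
theory Submission
  imports Defs "HOL-Computational_Algebra.Polynomial"
begin

section \<open>Differentiation on open sets of reals\<close>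

lemma DERIV_const_on_open:
  assumes "open U" "s \<in> U" "\<forall>x\<in>U. f x = c" "(f has_real_derivative d) (at s)"
  shows "d = 0"
proof -
  have "(f has_real_derivative 0) (at s)"
    by (rule has_field_derivative_transform_within_open[OF DERIV_const assms(1,2)])
      (simp add: assms(3))
  then show ?thesis
    using assms(4) DERIV_unique by blast
qed

lemma continuous_poly_root_on_connected_imp_const:
  fixes f :: "'a::topological_space \<Rightarrow> real"
  assumes "connected S" "continuous_on S f" "p \<noteq> 0" "\<forall>x\<in>S. poly p (f x) = 0"
  shows "\<exists>c. \<forall>x\<in>S. f x = c"
proof -
  have "finite (f ` S)"
    using finite_subset[OF _ poly_roots_finite[OF assms(3)]] assms(4) by blast
  moreover have "connected (f ` S)"
    using connected_continuous_image assms(1,2) by blast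
  ultimately show ?thesis
    using connected_finite_iff_sing by (metis empty_iff image_eqI insert_iff)
qed

lemma DERIV_zero_if_poly_root_on_open:
  assumes "open U" "s \<in> U" "continuous_on U f" "p \<noteq> 0" "\<forall>x\<in>U. poly p (f x) = 0"
    and "(f has_real_derivative d) (at s)"
  shows "d = 0"
proof -
  obtain e where e: "e > 0" "ball s e \<subseteq> U"
    using assms(1,2) open_contains_ball by blast
  obtain c where "\<forall>x\<in>ball s e. f x = c"
    using continuous_poly_root_on_connected_imp_const[of "ball s e" f p]
      continuous_on_subset[OF assms(3) e(2)] assms(4,5) e(2) by auto
  then show ?thesis
    using DERIV_const_on_open[OF open_ball _ _ assms(6)] e(1) centre_in_ball by blast
qed

fun ntimes_differentiable_on :: "nat \<Rightarrow> real set \<Rightarrow> (real \<Rightarrow> 'a::real_normed_vector) \<Rightarrow> bool" where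
  "ntimes_differentiable_on 0 I f \<longleftrightarrow> True"
| "ntimes_differentiable_on (Suc n) I f \<longleftrightarrow>
     (\<exists>f'. (\<forall>s\<in>I. (f has_vector_derivative f' s) (at s)) \<and> ntimes_differentiable_on n I f')"

declare ntimes_differentiable_on.simps(2) [simp del]

lemma ntimes_differentiable_onI:
  "\<forall>s\<in>I. (f has_vector_derivative f' s) (at s) \<Longrightarrow> ntimes_differentiable_on n I f'
    \<Longrightarrow> ntimes_differentiable_on (Suc n) I f"
  unfolding ntimes_differentiable_on.simps(2) by blast

lemma ntimes_differentiable_onE:
  assumes "ntimes_differentiable_on (Suc n) I f"
  obtains f' where "\<forall>s\<in>I. (f has_vector_derivative f' s) (at s)" "ntimes_differentiable_on n I f'"
  using assms unfolding ntimes_differentiable_on.simps(2) by blast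

lemma ntimes_differentiable_on_Suc_imp:
  "ntimes_differentiable_on (Suc n) I f \<Longrightarrow> ntimes_differentiable_on n I f"
proof (induction n arbitrary: f)
  case (Suc n)
  obtain f' where "\<forall>s\<in>I. (f has_vector_derivative f' s) (at s)"
    "ntimes_differentiable_on (Suc n) I f'"
    using Suc.prems by (rule ntimes_differentiable_onE)
  then show ?case
    using Suc.IH ntimes_differentiable_onI by blast
qed simp

lemma ntimes_differentiable_on_cong:
  assumes "open I" "\<And>s. s \<in> I \<Longrightarrow> f s = g s" "ntimes_differentiable_on n I f"
  shows "ntimes_differentiable_on n I g"
proof (cases n)
  case (Suc m)
  then obtain f' where f': "\<forall>s\<in>I. (f has_vector_derivative f' s) (at s)"
    "ntimes_differentiable_on m I f'"
    using assms(3) ntimes_differentiable_onE by blast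
  have "\<forall>s\<in>I. (g has_vector_derivative f' s) (at s)"
    using f'(1) has_vector_derivative_transform_within_open[OF _ assms(1)] assms(2) by blast
  then show ?thesis
    using Suc f'(2) ntimes_differentiable_onI by blast
qed simp

lemma ntimes_differentiable_on_has_derivative:
  "ntimes_differentiable_on (Suc n) I f \<Longrightarrow> s \<in> I
    \<Longrightarrow> (f has_vector_derivative vector_derivative f (at s)) (at s)"
  by (erule ntimes_differentiable_onE) (auto simp: vector_derivative_at)

lemma ntimes_differentiable_on_realE:
  fixes f :: "real \<Rightarrow> real"
  assumes "ntimes_differentiable_on (Suc n) I f"
  obtains f' where "\<forall>s\<in>I. (f has_real_derivative f' s) (at s)" "ntimes_differentiable_on n I f'"
  using assms by (auto elim!: ntimes_differentiable_onE
      simp: has_real_derivative_iff_has_vector_derivative)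

lemma ntimes_differentiable_on_const: "ntimes_differentiable_on n I (\<lambda>_. c)"
proof (induction n arbitrary: c)
  case (Suc n)
  show ?case
    by (rule ntimes_differentiable_onI[OF _ Suc.IH[of 0]]) simp
qed simp

lemma ntimes_differentiable_on_add:
  "ntimes_differentiable_on n I f \<Longrightarrow> ntimes_differentiable_on n I g
    \<Longrightarrow> ntimes_differentiable_on n I (\<lambda>s. f s + g s)"
proof (induction n arbitrary: f g)
  case (Suc n)
  obtain f' where f': "\<forall>s\<in>I. (f has_vector_derivative f' s) (at s)"
    "ntimes_differentiable_on n I f'"
    using Suc.prems(1) by (rule ntimes_differentiable_onE)
  obtain g' where g': "\<forall>s\<in>I. (g has_vector_derivative g' s) (at s)"
    "ntimes_differentiable_on n I g'"
    using Suc.prems(2) by (rule ntimes_differentiable_onE)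
  have "\<forall>s\<in>I. ((\<lambda>s. f s + g s) has_vector_derivative f' s + g' s) (at s)"
    using f'(1) g'(1) by (simp add: has_vector_derivative_add)
  then show ?case
    using Suc.IH[OF f'(2) g'(2)] by (rule ntimes_differentiable_onI)
qed simp

lemma ntimes_differentiable_on_bilinear:
  assumes "bounded_bilinear bil"
  shows "ntimes_differentiable_on n I f \<Longrightarrow> ntimes_differentiable_on n I g
    \<Longrightarrow> ntimes_differentiable_on n I (\<lambda>s. bil (f s) (g s))"
proof (induction n arbitrary: f g)
  case (Suc n)
  obtain f' where f': "\<forall>s\<in>I. (f has_vector_derivative f' s) (at s)"
    "ntimes_differentiable_on n I f'"
    using Suc.prems(1) by (rule ntimes_differentiable_onE)
  obtain g' where g': "\<forall>s\<in>I. (g has_vector_derivative g' s) (at s)"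
    "ntimes_differentiable_on n I g'"
    using Suc.prems(2) by (rule ntimes_differentiable_onE)
  have "\<forall>s\<in>I. ((\<lambda>s. bil (f s) (g s)) has_vector_derivative bil (f s) (g' s) + bil (f' s) (g s)) (at s)"
    using f'(1) g'(1) bounded_bilinear.has_vector_derivative[OF assms] by blast
  moreover have "ntimes_differentiable_on n I (\<lambda>s. bil (f s) (g' s) + bil (f' s) (g s))"
    using Suc.IH[OF ntimes_differentiable_on_Suc_imp[OF Suc.prems(1)] g'(2)]
      Suc.IH[OF f'(2) ntimes_differentiable_on_Suc_imp[OF Suc.prems(2)]]
    by (rule ntimes_differentiable_on_add)
  ultimately show ?case
    by (rule ntimes_differentiable_onI)
qed simp

lemmas ntimes_differentiable_on_mult = ntimes_differentiable_on_bilinear[OF bounded_bilinear_mult]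
lemmas ntimes_differentiable_on_scaleR = ntimes_differentiable_on_bilinear[OF bounded_bilinear_scaleR]

lemma ntimes_differentiable_on_inverse:
  fixes f :: "real \<Rightarrow> real"
  shows "ntimes_differentiable_on n I f \<Longrightarrow> \<forall>s\<in>I. f s \<noteq> 0
    \<Longrightarrow> ntimes_differentiable_on n I (\<lambda>s. inverse (f s))"
proof (induction n arbitrary: f)
  case (Suc n)
  obtain f' where f': "\<forall>s\<in>I. (f has_real_derivative f' s) (at s)" "ntimes_differentiable_on n I f'"
    using Suc.prems(1) by (rule ntimes_differentiable_on_realE)
  have "\<forall>s\<in>I. ((\<lambda>s. inverse (f s)) has_real_derivative
      (-1) * f' s * (inverse (f s) * inverse (f s))) (at s)"
    using f'(1) Suc.prems(2) by (auto intro!: derivative_eq_intros)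
  moreover have "ntimes_differentiable_on n I (\<lambda>s. inverse (f s))"
    using Suc ntimes_differentiable_on_Suc_imp by blast
  then have "ntimes_differentiable_on n I (\<lambda>s. (-1) * f' s * (inverse (f s) * inverse (f s)))"
    using f'(2) by (intro ntimes_differentiable_on_mult ntimes_differentiable_on_const)
  ultimately show ?case
    by (intro ntimes_differentiable_onI) (auto simp: has_real_derivative_iff_has_vector_derivative)
qed simp

lemma ntimes_differentiable_on_sqrt:
  fixes f :: "real \<Rightarrow> real"
  shows "ntimes_differentiable_on n I f \<Longrightarrow> \<forall>s\<in>I. f s > 0
    \<Longrightarrow> ntimes_differentiable_on n I (\<lambda>s. sqrt (f s))"
proof (induction n arbitrary: f)
  case (Suc n)
  obtain f' where f': "\<forall>s\<in>I. (f has_real_derivative f' s) (at s)" "ntimes_differentiable_on n I f'"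
    using Suc.prems(1) by (rule ntimes_differentiable_on_realE)
  have "\<forall>s\<in>I. ((\<lambda>s. sqrt (f s)) has_real_derivative f' s * inverse (2 * sqrt (f s))) (at s)"
    using f'(1) Suc.prems(2) by (auto intro!: derivative_eq_intros simp: field_simps)
  moreover have "ntimes_differentiable_on n I (\<lambda>s. sqrt (f s))"
    using Suc ntimes_differentiable_on_Suc_imp by blast
  then have "ntimes_differentiable_on n I (\<lambda>s. f' s * inverse (2 * sqrt (f s)))"
    using f'(2) Suc.prems(2)
    by (intro ntimes_differentiable_on_mult ntimes_differentiable_on_inverse
        ntimes_differentiable_on_const) auto
  ultimately show ?case
    by (intro ntimes_differentiable_onI) (auto simp: has_real_derivative_iff_has_vector_derivative)
qed simp

lemma smooth_on_imp_ntimes_differentiable_on: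
  assumes "smooth_on I f"
  shows "ntimes_differentiable_on n I f"
proof -
  obtain D where D: "D 0 = f" "\<forall>k. \<forall>s\<in>I. (D k has_vector_derivative D (Suc k) s) (at s)"
    using assms unfolding smooth_on_def by blast
  have "\<forall>k. ntimes_differentiable_on n I (D k)"
  proof (induction n)
    case (Suc n)
    then show ?case
      using D(2) ntimes_differentiable_onI by blast
  qed simp
  then show ?thesis
    using D(1) by metis
qed

section \<open>The curvature equations of a triharmonic curve with constant torsion\<close>

text \<open>For torsion 0 the tangential equation has the first integral
  2 kappa kappa'' + kappa'^2 - kappa^4 = K. Eliminating kappa'''' and kappa''' from the normal
  equation with the tangential one, and then kappa'' with the first integral, leaves the
  relation Q(K, rho, kappa, kappa'^2) = 0 defined here.\<close>
definition torsion_free_relation :: "real \<Rightarrow> real \<Rightarrow> real \<Rightarrow> real \<Rightarrow> real" where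
  "torsion_free_relation K \<rho> k u =
     K\<^sup>2 - 8*K*u + 7*u\<^sup>2 - \<rho>*K*k\<^sup>2 + \<rho>*u*k\<^sup>2 + 10*K*k^4 + 14*u*k^4 + 3*\<rho>*k^6 + 7*k^8"

text \<open>H = k dQ/dk + (K + k^4 - u) dQ/du: by the first integral, kappa times the derivative of
  Q(K, rho, kappa, kappa'^2) is kappa' H(K, rho, kappa, kappa'^2).\<close>
definition torsion_free_relation_deriv :: "real \<Rightarrow> real \<Rightarrow> real \<Rightarrow> real \<Rightarrow> real" where
  "torsion_free_relation_deriv K \<rho> k u =
     - 8*K\<^sup>2 + 22*K*u - 14*u\<^sup>2 - \<rho>*K*k\<^sup>2 + \<rho>*u*k\<^sup>2 + 46*K*k^4 + 56*u*k^4 + 19*\<rho>*k^6 + 70*k^8"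

definition torsion_free_resultant :: "real \<Rightarrow> real \<Rightarrow> real poly" where
  "torsion_free_resultant K \<rho> =
     [:- 4536*K^3, - 3528*K\<^sup>2*\<rho>, 90720*K\<^sup>2 - 726*K*\<rho>\<^sup>2, 32256*K*\<rho> - 48*\<rho>^3,
       127008*K + 2548*\<rho>\<^sup>2, 14112*\<rho>:]"

text \<open>H + 2 Q is linear in u, with leading coefficient 6K + 3 rho k^2 + 84 k^4; solving it for u
  and substituting into Q eliminates u between Q = 0 and H = 0.\<close>
lemma torsion_free_resultant_identity:
  "k^4 * poly (torsion_free_resultant K \<rho>) (k\<^sup>2) =
     (6*K + 3*\<rho>*k\<^sup>2 + 84*k^4)\<^sup>2 * torsion_free_relation K \<rho> k u
     - (torsion_free_relation_deriv K \<rho> k u + 2 * torsion_free_relation K \<rho> k u)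
       * (7 * ((6*K + 3*\<rho>*k\<^sup>2 + 84*k^4) * u
               + (6*K\<^sup>2 + 3*\<rho>*K*k\<^sup>2 - 66*K*k^4 - 25*\<rho>*k^6 - 84*k^8))
          + (14*k^4 + \<rho>*k\<^sup>2 - 8*K) * (6*K + 3*\<rho>*k\<^sup>2 + 84*k^4))"
  unfolding torsion_free_resultant_def torsion_free_relation_def torsion_free_relation_deriv_def
  by simp algebra

lemma torsion_free_resultant_eq_0_iff:
  "torsion_free_resultant K \<rho> = 0 \<longleftrightarrow> K = 0 \<and> \<rho> = 0"
  by (auto simp: torsion_free_resultant_def)

lemma torsion_free_relation_degenerate:
  "torsion_free_relation 0 0 k u = 7 * (u + k^4)\<^sup>2"
  unfolding torsion_free_relation_def by simp algebra

text \<open>The T, N and B components of the triharmonic equation of a Frenet curve with constant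
  torsion c, where kappa1, ..., kappa4 are the derivatives of the curvature kappa.\<close>
locale triharmonic_curvature_ODE =
  fixes I :: "real set" and \<rho> c :: real and \<kappa> \<kappa>1 \<kappa>2 \<kappa>3 \<kappa>4 :: "real \<Rightarrow> real"
  assumes open_I: "open I" and interval_I: "is_interval I"
    and curvature_pos: "\<And>x. x \<in> I \<Longrightarrow> \<kappa> x > 0"
    and deriv1: "\<And>x. x \<in> I \<Longrightarrow> (\<kappa> has_real_derivative \<kappa>1 x) (at x)"
    and deriv2: "\<And>x. x \<in> I \<Longrightarrow> (\<kappa>1 has_real_derivative \<kappa>2 x) (at x)"
    and deriv3: "\<And>x. x \<in> I \<Longrightarrow> (\<kappa>2 has_real_derivative \<kappa>3 x) (at x)"
    and deriv4: "\<And>x. x \<in> I \<Longrightarrow> (\<kappa>3 has_real_derivative \<kappa>4 x) (at x)"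
    and tangent_eq: "\<And>x. x \<in> I \<Longrightarrow>
      2 * \<kappa>1 x * \<kappa>2 x + \<kappa> x * \<kappa>3 x - c\<^sup>2 * \<kappa> x * \<kappa>1 x - 2 * \<kappa> x ^ 3 * \<kappa>1 x = 0"
    and normal_eq: "\<And>x. x \<in> I \<Longrightarrow>
      \<kappa>4 x - 6 * c\<^sup>2 * \<kappa>2 x + c^4 * \<kappa> x - 15 * \<kappa> x * (\<kappa>1 x)\<^sup>2 - 10 * (\<kappa> x)\<^sup>2 * \<kappa>2 x
      + 2 * c\<^sup>2 * \<kappa> x ^ 3 + \<kappa> x ^ 5 + \<rho> * (\<kappa>2 x - c\<^sup>2 * \<kappa> x - 2 * \<kappa> x ^ 3) = 0"
    and binormal_eq: "\<And>x. x \<in> I \<Longrightarrow>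
      c * (4 * \<kappa>3 x - 4 * c\<^sup>2 * \<kappa>1 x - 9 * (\<kappa> x)\<^sup>2 * \<kappa>1 x + 2 * \<rho> * \<kappa>1 x) = 0"
begin

lemmas derivs = deriv1 deriv2 deriv3 deriv4

lemma nonzero_torsion_curvature_relation:
  assumes "c \<noteq> 0" "open U" "U \<subseteq> I" "\<And>x. x \<in> U \<Longrightarrow> \<kappa>1 x \<noteq> 0" "x \<in> U"
  shows "8 * c\<^sup>2 - 6 * \<rho> + 21 * (\<kappa> x)\<^sup>2 = 0"
proof -
  have second_order: "8 * \<kappa>2 y + \<kappa> y ^ 3 - 2 * \<rho> * \<kappa> y = 0" if "y \<in> U" for y
  proof -
    have y: "y \<in> I"
      using that assms(3) by blast
    have "c * \<kappa>1 y * (8 * \<kappa>2 y + \<kappa> y ^ 3 - 2 * \<rho> * \<kappa> y) =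
        4 * c * (2 * \<kappa>1 y * \<kappa>2 y + \<kappa> y * \<kappa>3 y - c\<^sup>2 * \<kappa> y * \<kappa>1 y - 2 * \<kappa> y ^ 3 * \<kappa>1 y)
        - \<kappa> y * (c * (4 * \<kappa>3 y - 4 * c\<^sup>2 * \<kappa>1 y - 9 * (\<kappa> y)\<^sup>2 * \<kappa>1 y + 2 * \<rho> * \<kappa>1 y))"
      by algebra
    also have "\<dots> = 0"
      using tangent_eq[OF y] binormal_eq[OF y] by simp
    finally have "c * \<kappa>1 y * (8 * \<kappa>2 y + \<kappa> y ^ 3 - 2 * \<rho> * \<kappa> y) = 0" .
    then show ?thesis
      using assms(1,4) that by simp
  qed
  have x: "x \<in> I"
    using assms(3,5) by blast
  have "((\<lambda>y. 8 * \<kappa>2 y + \<kappa> y ^ 3 - 2 * \<rho> * \<kappa> y) has_real_derivative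
      8 * \<kappa>3 x + 3 * (\<kappa> x)\<^sup>2 * \<kappa>1 x - 2 * \<rho> * \<kappa>1 x) (at x)"
    by (rule DERIV_cong, (rule derivative_intros derivs[OF x])+) (simp add: algebra_simps power2_eq_square)
  then have third_order: "8 * \<kappa>3 x + 3 * (\<kappa> x)\<^sup>2 * \<kappa>1 x - 2 * \<rho> * \<kappa>1 x = 0"
    by (rule DERIV_const_on_open[OF assms(2,5), where c = 0, rotated]) (simp add: second_order)
  have "c * \<kappa>1 x * (8 * c\<^sup>2 - 6 * \<rho> + 21 * (\<kappa> x)\<^sup>2) =
      c * (8 * \<kappa>3 x + 3 * (\<kappa> x)\<^sup>2 * \<kappa>1 x - 2 * \<rho> * \<kappa>1 x)
      - 2 * (c * (4 * \<kappa>3 x - 4 * c\<^sup>2 * \<kappa>1 x - 9 * (\<kappa> x)\<^sup>2 * \<kappa>1 x + 2 * \<rho> * \<kappa>1 x))"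
    by algebra
  also have "\<dots> = 0"
    using third_order binormal_eq[OF x] by simp
  finally show ?thesis
    using assms(1,4,5) by simp
qed

lemma zero_torsion_first_integral:
  assumes "c = 0"
  obtains K where "\<And>x. x \<in> I \<Longrightarrow> 2 * \<kappa> x * \<kappa>2 x + (\<kappa>1 x)\<^sup>2 - \<kappa> x ^ 4 = K"
proof -
  have "\<exists>K. \<forall>x\<in>I. 2 * \<kappa> x * \<kappa>2 x + (\<kappa>1 x)\<^sup>2 - \<kappa> x ^ 4 = K"
  proof (rule has_field_derivative_zero_constant)
    show "convex I"
      using interval_I by (simp add: is_interval_convex)
  next
    fix x assume x: "x \<in> I"
    have "((\<lambda>x. 2 * \<kappa> x * \<kappa>2 x + (\<kappa>1 x)\<^sup>2 - \<kappa> x ^ 4) has_real_derivative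
        2 * (2 * \<kappa>1 x * \<kappa>2 x + \<kappa> x * \<kappa>3 x - c\<^sup>2 * \<kappa> x * \<kappa>1 x - 2 * \<kappa> x ^ 3 * \<kappa>1 x)) (at x)"
      by (rule DERIV_cong, (rule derivative_intros derivs[OF x])+)
        (simp add: assms algebra_simps power2_eq_square power3_eq_cube)
    then show "((\<lambda>x. 2 * \<kappa> x * \<kappa>2 x + (\<kappa>1 x)\<^sup>2 - \<kappa> x ^ 4) has_real_derivative 0) (at x within I)"
      using tangent_eq[OF x] by (simp add: has_field_derivative_at_within)
  qed
  then show ?thesis
    using that by blast
qed

lemma zero_torsion_relation:
  assumes "c = 0" and first_integral: "\<And>x. x \<in> I \<Longrightarrow> 2 * \<kappa> x * \<kappa>2 x + (\<kappa>1 x)\<^sup>2 - \<kappa> x ^ 4 = K"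
    and "x \<in> I"
  shows "torsion_free_relation K \<rho> (\<kappa> x) ((\<kappa>1 x)\<^sup>2) = 0"
proof -
  define tangential where
    "tangential y = 2 * \<kappa>1 y * \<kappa>2 y + \<kappa> y * \<kappa>3 y - 2 * \<kappa> y ^ 3 * \<kappa>1 y" for y
  have tangential_0: "tangential y = 0" if "y \<in> I" for y
    using tangent_eq[OF that] assms(1) by (simp add: tangential_def)
  have "(tangential has_real_derivative
      2 * (\<kappa>2 x)\<^sup>2 + 3 * \<kappa>1 x * \<kappa>3 x + \<kappa> x * \<kappa>4 x - 6 * (\<kappa> x)\<^sup>2 * (\<kappa>1 x)\<^sup>2 - 2 * \<kappa> x ^ 3 * \<kappa>2 x) (at x)"
    unfolding tangential_def[abs_def]
    by (rule DERIV_cong, (rule derivative_intros derivs[OF \<open>x \<in> I\<close>])+)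
      (simp add: algebra_simps power2_eq_square power3_eq_cube)
  then have tangential_deriv_0: "2 * (\<kappa>2 x)\<^sup>2 + 3 * \<kappa>1 x * \<kappa>3 x + \<kappa> x * \<kappa>4 x - 6 * (\<kappa> x)\<^sup>2 * (\<kappa>1 x)\<^sup>2
      - 2 * \<kappa> x ^ 3 * \<kappa>2 x = 0"
    by (rule DERIV_const_on_open[OF open_I \<open>x \<in> I\<close>, where c = 0, rotated])
      (simp add: tangential_0)
  have "torsion_free_relation K \<rho> (\<kappa> x) ((\<kappa>1 x)\<^sup>2) =
      2 * \<kappa> x * (\<kappa> x * (2 * (\<kappa>2 x)\<^sup>2 + 3 * \<kappa>1 x * \<kappa>3 x + \<kappa> x * \<kappa>4 x
                         - 6 * (\<kappa> x)\<^sup>2 * (\<kappa>1 x)\<^sup>2 - 2 * \<kappa> x ^ 3 * \<kappa>2 x)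
                 - 3 * \<kappa>1 x * tangential x
                 - (\<kappa> x)\<^sup>2 * (\<kappa>4 x - 15 * \<kappa> x * (\<kappa>1 x)\<^sup>2 - 10 * (\<kappa> x)\<^sup>2 * \<kappa>2 x + \<kappa> x ^ 5
                               + \<rho> * (\<kappa>2 x - 2 * \<kappa> x ^ 3)))
      + (K + \<kappa> x ^ 4 - (\<kappa>1 x)\<^sup>2 - 2 * \<kappa> x * \<kappa>2 x)
        * (K + 9 * \<kappa> x ^ 4 - 7 * (\<kappa>1 x)\<^sup>2 + 2 * \<kappa> x * \<kappa>2 x - \<rho> * (\<kappa> x)\<^sup>2)"
    unfolding torsion_free_relation_def tangential_def by algebra
  also have "\<dots> = 0"
    using tangential_deriv_0 tangential_0[OF \<open>x \<in> I\<close>] normal_eq[OF \<open>x \<in> I\<close>] first_integral[OF \<open>x \<in> I\<close>] assms(1)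
    by simp
  finally show ?thesis .
qed

lemma zero_torsion_relation_deriv:
  assumes first_integral: "\<And>x. x \<in> I \<Longrightarrow> 2 * \<kappa> x * \<kappa>2 x + (\<kappa>1 x)\<^sup>2 - \<kappa> x ^ 4 = K"
    and relation: "\<And>x. x \<in> I \<Longrightarrow> torsion_free_relation K \<rho> (\<kappa> x) ((\<kappa>1 x)\<^sup>2) = 0"
    and "x \<in> I" "\<kappa>1 x \<noteq> 0"
  shows "torsion_free_relation_deriv K \<rho> (\<kappa> x) ((\<kappa>1 x)\<^sup>2) = 0"
proof -
  define k u where "k = \<kappa> x" and "u = (\<kappa>1 x)\<^sup>2"
  define Q_k where "Q_k = - 2*\<rho>*K*k + 2*\<rho>*u*k + 40*K*k^3 + 56*u*k^3 + 18*\<rho>*k^5 + 56*k^7"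
  define Q_u where "Q_u = - 8*K + 14*u + \<rho>*k\<^sup>2 + 14*k^4"
  have "((\<lambda>y. torsion_free_relation K \<rho> (\<kappa> y) ((\<kappa>1 y)\<^sup>2)) has_real_derivative
      Q_k * \<kappa>1 x + Q_u * (2 * \<kappa>1 x * \<kappa>2 x)) (at x)"
    unfolding torsion_free_relation_def Q_k_def Q_u_def k_def u_def
    by (rule DERIV_cong, (rule derivative_intros derivs[OF \<open>x \<in> I\<close>])+)
      (simp add: algebra_simps power2_eq_square power3_eq_cube eval_nat_numeral)
  then have "Q_k * \<kappa>1 x + Q_u * (2 * \<kappa>1 x * \<kappa>2 x) = 0"
    by (rule DERIV_const_on_open[OF open_I \<open>x \<in> I\<close>, where c = 0, rotated]) (simp add: relation)
  moreover have "\<kappa>1 x * torsion_free_relation_deriv K \<rho> k u =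
      k * (Q_k * \<kappa>1 x + Q_u * (2 * \<kappa>1 x * \<kappa>2 x))
      - \<kappa>1 x * Q_u * (2 * k * \<kappa>2 x + u - k^4 - K)"
    unfolding torsion_free_relation_deriv_def Q_k_def Q_u_def by algebra
  ultimately show ?thesis
    using first_integral[OF \<open>x \<in> I\<close>] \<open>\<kappa>1 x \<noteq> 0\<close> by (simp add: k_def u_def)
qed

lemma zero_torsion_curvature_relation:
  assumes "c = 0" "U \<subseteq> I" "\<And>x. x \<in> U \<Longrightarrow> \<kappa>1 x \<noteq> 0"
  obtains P where "P \<noteq> 0" "\<And>x. x \<in> U \<Longrightarrow> poly P ((\<kappa> x)\<^sup>2) = 0"
proof -
  obtain K where first_integral: "\<And>x. x \<in> I \<Longrightarrow> 2 * \<kappa> x * \<kappa>2 x + (\<kappa>1 x)\<^sup>2 - \<kappa> x ^ 4 = K"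
    using zero_torsion_first_integral[OF assms(1)] by blast
  have relation: "torsion_free_relation K \<rho> (\<kappa> x) ((\<kappa>1 x)\<^sup>2) = 0" if "x \<in> I" for x
    by (rule zero_torsion_relation[OF assms(1)]) (use first_integral that in auto)
  show ?thesis
  proof (cases "K = 0 \<and> \<rho> = 0")
    case True
    have "torsion_free_relation K \<rho> (\<kappa> x) ((\<kappa>1 x)\<^sup>2) > 0" if "x \<in> I" for x
    proof -
      have "(\<kappa>1 x)\<^sup>2 + \<kappa> x ^ 4 > 0"
        using curvature_pos[OF that] by (simp add: add_nonneg_pos)
      then show ?thesis
        using True by (simp add: torsion_free_relation_degenerate)
    qed
    then have "U = {}"
      using relation assms(2) by fastforce
    then show ?thesis
      using that[of 1] by simp
  next
    case False
    show ?thesis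
    proof (rule that)
      show "torsion_free_resultant K \<rho> \<noteq> 0"
        using False by (simp add: torsion_free_resultant_eq_0_iff)
    next
      fix x assume "x \<in> U"
      then have x: "x \<in> I" "\<kappa>1 x \<noteq> 0"
        using assms(2,3) by auto
      have "(\<kappa> x)^4 * poly (torsion_free_resultant K \<rho>) ((\<kappa> x)\<^sup>2) = 0"
        unfolding torsion_free_resultant_identity[of _ _ _ "(\<kappa>1 x)\<^sup>2"]
        using relation[OF x(1)] zero_torsion_relation_deriv[OF first_integral relation x] by simp
      then show "poly (torsion_free_resultant K \<rho>) ((\<kappa> x)\<^sup>2) = 0"
        using curvature_pos[OF x(1)] by simp
    qed
  qed
qed

lemma curvature_derivative_eq_0:
  assumes "x \<in> I"
  shows "\<kappa>1 x = 0"
proof (rule ccontr)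
  assume "\<kappa>1 x \<noteq> 0"
  define U where "U = I \<inter> \<kappa>1 -` (- {0})"
  have "continuous_on I \<kappa>1"
    using deriv2 DERIV_isCont continuous_at_imp_continuous_on by blast
  then have "open U"
    unfolding U_def using continuous_open_preimage open_I by blast
  have U: "U \<subseteq> I" "\<And>y. y \<in> U \<Longrightarrow> \<kappa>1 y \<noteq> 0" "x \<in> U"
    using assms \<open>\<kappa>1 x \<noteq> 0\<close> by (auto simp: U_def)
  obtain P where P: "P \<noteq> 0" "\<And>y. y \<in> U \<Longrightarrow> poly P ((\<kappa> y)\<^sup>2) = 0"
  proof (cases "c = 0")
    case True
    then show ?thesis
      using zero_torsion_curvature_relation U(1,2) that by blast
  next
    case False
    show ?thesis
    proof (rule that[of "[:8 * c\<^sup>2 - 6 * \<rho>, 21:]"])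
      fix y assume "y \<in> U"
      then show "poly [:8 * c\<^sup>2 - 6 * \<rho>, 21:] ((\<kappa> y)\<^sup>2) = 0"
        using nonzero_torsion_curvature_relation[OF False \<open>open U\<close> U(1,2) \<open>y \<in> U\<close>]
        by (simp add: mult.commute)
    qed simp
  qed
  have "continuous_on U (\<lambda>y. (\<kappa> y)\<^sup>2)"
    using deriv1 U(1) DERIV_isCont continuous_at_imp_continuous_on
    by (metis continuous_on_power subsetD)
  moreover have "((\<lambda>y. (\<kappa> y)\<^sup>2) has_real_derivative 2 * \<kappa> x * \<kappa>1 x) (at x)"
    by (rule DERIV_cong, (rule derivative_intros deriv1[OF assms])+) simp
  ultimately have "2 * \<kappa> x * \<kappa>1 x = 0"
    using DERIV_zero_if_poly_root_on_open[OF \<open>open U\<close> U(3) _ P(1)] P(2) by blast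
  then show False
    using curvature_pos[OF assms] \<open>\<kappa>1 x \<noteq> 0\<close> by simp
qed

lemma curvature_constant: "\<exists>k. \<forall>x\<in>I. \<kappa> x = k"
proof (rule has_field_derivative_zero_constant)
  show "convex I"
    using interval_I by (simp add: is_interval_convex)
next
  fix x assume "x \<in> I"
  then show "(\<kappa> has_real_derivative 0) (at x within I)"
    using deriv1 curvature_derivative_eq_0 has_field_derivative_at_within by metis
qed

end

section \<open>Frenet curves in the space form\<close>

lemma amb_add_left [simp]: "amb \<rho> (x + y) z = amb \<rho> x z + amb \<rho> y z"
  and amb_add_right [simp]: "amb \<rho> z (x + y) = amb \<rho> z x + amb \<rho> z y"
  and amb_diff_left [simp]: "amb \<rho> (x - y) z = amb \<rho> x z - amb \<rho> y z"
  and amb_diff_right [simp]: "amb \<rho> z (x - y) = amb \<rho> z x - amb \<rho> z y"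
  and amb_minus_left [simp]: "amb \<rho> (- x) z = - amb \<rho> x z"
  and amb_minus_right [simp]: "amb \<rho> z (- x) = - amb \<rho> z x"
  and amb_scaleR_left [simp]: "amb \<rho> (a *\<^sub>R x) z = a * amb \<rho> x z"
  and amb_scaleR_right [simp]: "amb \<rho> z (a *\<^sub>R x) = a * amb \<rho> z x"
  and amb_zero_left [simp]: "amb \<rho> 0 z = 0"
  and amb_zero_right [simp]: "amb \<rho> z 0 = 0"
  by (simp_all add: amb_def algebra_simps)

lemma amb_commute: "amb \<rho> x y = amb \<rho> y x"
  by (simp add: amb_def algebra_simps)

lemma bounded_bilinear_amb: "bounded_bilinear (amb \<rho>)"
proof
  show "\<exists>K. \<forall>x y. norm (amb \<rho> x y) \<le> norm x * norm y * K"
  proof (intro exI allI)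
    fix x y :: "real^4"
    have component: "\<bar>x$i * y$i\<bar> \<le> norm x * norm y" for i
      by (simp add: abs_mult mult_mono component_le_norm_cart)
    have "norm (amb \<rho> x y) \<le> \<bar>x$1*y$1\<bar> + \<bar>x$2*y$2\<bar> + \<bar>x$3*y$3\<bar> + \<bar>x$4*y$4\<bar>"
      unfolding amb_def abs_mult[symmetric] real_norm_def by (cases "\<rho> < 0"; simp; arith)
    also have "\<dots> \<le> norm x * norm y * 4"
      using component[of 1] component[of 2] component[of 3] component[of 4] by simp
    finally show "norm (amb \<rho> x y) \<le> norm x * norm y * 4" .
  qed
qed simp_all

lemmas ntimes_differentiable_on_amb = ntimes_differentiable_on_bilinear[OF bounded_bilinear_amb]

lemma amb_has_real_derivative:
  assumes "(f has_vector_derivative f') (at s)" "(g has_vector_derivative g') (at s)"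
  shows "((\<lambda>x. amb \<rho> (f x) (g x)) has_real_derivative amb \<rho> (f s) g' + amb \<rho> f' (g s)) (at s)"
  using bounded_bilinear.has_vector_derivative[OF bounded_bilinear_amb assms]
  by (simp add: has_real_derivative_iff_has_vector_derivative)

definition covT_gram :: "real \<Rightarrow> (real \<Rightarrow> real^4) \<Rightarrow> nat \<Rightarrow> nat \<Rightarrow> real \<Rightarrow> real" where
  "covT_gram \<rho> \<gamma> i j s = amb \<rho> (covT \<rho> \<gamma> i s) (covT \<rho> \<gamma> j s)"

lemma covT_gram_commute: "covT_gram \<rho> \<gamma> i j s = covT_gram \<rho> \<gamma> j i s"
  unfolding covT_gram_def by (rule amb_commute)

locale frenet_curve =
  fixes \<rho> :: real and I :: "real set" and \<gamma> :: "real \<Rightarrow> real^4"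
    and \<kappa> \<tau> :: "real \<Rightarrow> real" and N B :: "real \<Rightarrow> real^4"
  assumes open_I: "open I" and interval_I: "is_interval I"
    and unit_speed: "unit_speed_curve_in \<rho> I \<gamma>"
    and frenet: "frenet_on \<rho> I \<gamma> \<kappa> \<tau> N B"
begin

abbreviation "T \<equiv> tangent \<gamma>"

lemma curve_ntimes_differentiable: "ntimes_differentiable_on n I \<gamma>"
  using unit_speed smooth_on_imp_ntimes_differentiable_on unfolding unit_speed_curve_in_def by blast

lemma curve_has_derivative: "s \<in> I \<Longrightarrow> (\<gamma> has_vector_derivative T s) (at s)"
  using ntimes_differentiable_on_has_derivative[OF curve_ntimes_differentiable[of "Suc 0"]]
  by (simp add: tangent_def)

lemma tangent_ntimes_differentiable: "ntimes_differentiable_on n I T"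
proof -
  obtain \<gamma>' where \<gamma>': "\<forall>s\<in>I. (\<gamma> has_vector_derivative \<gamma>' s) (at s)"
    "ntimes_differentiable_on n I \<gamma>'"
    using curve_ntimes_differentiable[of "Suc n"] by (rule ntimes_differentiable_onE)
  have "\<gamma>' s = T s" if "s \<in> I" for s
    using vector_derivative_at[of \<gamma> "\<gamma>' s" s] \<gamma>'(1) that by (simp add: tangent_def)
  then show ?thesis
    using ntimes_differentiable_on_cong[OF open_I _ \<gamma>'(2)] by blast
qed

lemma covD_eq:
  "(V has_vector_derivative V') (at s) \<Longrightarrow> covD \<rho> \<gamma> V s = V' + (\<rho> * amb \<rho> (T s) (V s)) *\<^sub>R \<gamma> s"
  unfolding covD_def tangent_def by (simp add: vector_derivative_at)

lemma covD_ntimes_differentiable: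
  assumes "ntimes_differentiable_on (Suc n) I V"
  shows "ntimes_differentiable_on n I (covD \<rho> \<gamma> V)"
proof -
  obtain V' where V': "\<forall>s\<in>I. (V has_vector_derivative V' s) (at s)" "ntimes_differentiable_on n I V'"
    using assms by (rule ntimes_differentiable_onE)
  have "ntimes_differentiable_on n I (\<lambda>s. amb \<rho> (T s) (V s))"
    using tangent_ntimes_differentiable ntimes_differentiable_on_Suc_imp[OF assms]
    by (rule ntimes_differentiable_on_amb)
  then have "ntimes_differentiable_on n I (\<lambda>s. (\<rho> * amb \<rho> (T s) (V s)) *\<^sub>R \<gamma> s)"
    using ntimes_differentiable_on_const curve_ntimes_differentiable
    by (intro ntimes_differentiable_on_scaleR ntimes_differentiable_on_mult)
  then have "ntimes_differentiable_on n I (\<lambda>s. V' s + (\<rho> * amb \<rho> (T s) (V s)) *\<^sub>R \<gamma> s)"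
    using V'(2) by (intro ntimes_differentiable_on_add)
  moreover have "V' s + (\<rho> * amb \<rho> (T s) (V s)) *\<^sub>R \<gamma> s = covD \<rho> \<gamma> V s" if "s \<in> I" for s
    using covD_eq[of V "V' s" s] V'(1) that by simp
  ultimately show ?thesis
    by (rule ntimes_differentiable_on_cong[OF open_I, rotated])
qed

lemma covT_ntimes_differentiable: "ntimes_differentiable_on n I (covT \<rho> \<gamma> k)"
proof (induction k arbitrary: n)
  case 0
  then show ?case
    using tangent_ntimes_differentiable by simp
next
  case (Suc k)
  then show ?case
    using covD_ntimes_differentiable by simp
qed

lemma covT_has_derivative:
  "s \<in> I \<Longrightarrow> (covT \<rho> \<gamma> k has_vector_derivative vector_derivative (covT \<rho> \<gamma> k) (at s)) (at s)"
  using ntimes_differentiable_on_has_derivative[OF covT_ntimes_differentiable[of "Suc 0"]] by blast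

lemma frenet_at:
  assumes "s \<in> I"
  shows "N differentiable (at s)" "B differentiable (at s)" "\<kappa> s > 0"
    "amb \<rho> (T s) (T s) = 1" "amb \<rho> (N s) (N s) = 1" "amb \<rho> (B s) (B s) = 1"
    "amb \<rho> (T s) (N s) = 0" "amb \<rho> (T s) (B s) = 0" "amb \<rho> (N s) (B s) = 0"
    "amb \<rho> (N s) (T s) = 0" "amb \<rho> (B s) (T s) = 0" "amb \<rho> (B s) (N s) = 0"
    "covD \<rho> \<gamma> T s = \<kappa> s *\<^sub>R N s"
    "covD \<rho> \<gamma> N s = - \<kappa> s *\<^sub>R T s + \<tau> s *\<^sub>R B s"
    "covD \<rho> \<gamma> B s = - \<tau> s *\<^sub>R N s"
  using frenet unit_speed assms unfolding frenet_on_def unit_speed_curve_in_def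
  by (auto simp: amb_commute)

lemma tangent_has_derivative:
  assumes "s \<in> I"
  shows "(T has_vector_derivative \<kappa> s *\<^sub>R N s - \<rho> *\<^sub>R \<gamma> s) (at s)"
proof -
  have "(T has_vector_derivative vector_derivative T (at s)) (at s)"
    using covT_has_derivative[OF assms, of 0] by simp
  moreover have "vector_derivative T (at s) = \<kappa> s *\<^sub>R N s - \<rho> *\<^sub>R \<gamma> s"
    using frenet_at[OF assms] unfolding covD_def tangent_def by (simp add: algebra_simps)
  ultimately show ?thesis
    by simp
qed

lemma normal_has_derivative:
  assumes "s \<in> I"
  shows "(N has_vector_derivative - \<kappa> s *\<^sub>R T s + \<tau> s *\<^sub>R B s) (at s)"
proof -
  have "vector_derivative N (at s) = - \<kappa> s *\<^sub>R T s + \<tau> s *\<^sub>R B s"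
    using frenet_at[OF assms] unfolding covD_def tangent_def by (simp add: algebra_simps)
  moreover have "(N has_vector_derivative vector_derivative N (at s)) (at s)"
    using frenet_at(1)[OF assms] vector_derivative_works by blast
  ultimately show ?thesis
    by simp
qed

lemma binormal_has_derivative:
  assumes "s \<in> I"
  shows "(B has_vector_derivative - \<tau> s *\<^sub>R N s) (at s)"
proof -
  have "vector_derivative B (at s) = - \<tau> s *\<^sub>R N s"
    using frenet_at[OF assms] unfolding covD_def tangent_def by (simp add: algebra_simps)
  moreover have "(B has_vector_derivative vector_derivative B (at s)) (at s)"
    using frenet_at(2)[OF assms] vector_derivative_works by blast
  ultimately show ?thesis
    by simp
qed

lemma covD_frame:
  assumes "s \<in> I" and V: "\<And>x. x \<in> I \<Longrightarrow> V x = a x *\<^sub>R T x + b x *\<^sub>R N x + e x *\<^sub>R B x"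
    and "(a has_real_derivative a') (at s)" "(b has_real_derivative b') (at s)"
    "(e has_real_derivative e') (at s)"
  shows "covD \<rho> \<gamma> V s =
    (a' - \<kappa> s * b s) *\<^sub>R T s + (b' + \<kappa> s * a s - \<tau> s * e s) *\<^sub>R N s + (e' + \<tau> s * b s) *\<^sub>R B s"
proof -
  let ?V' = "(a s *\<^sub>R (\<kappa> s *\<^sub>R N s - \<rho> *\<^sub>R \<gamma> s) + a' *\<^sub>R T s)
    + (b s *\<^sub>R (- \<kappa> s *\<^sub>R T s + \<tau> s *\<^sub>R B s) + b' *\<^sub>R N s) + (e s *\<^sub>R (- \<tau> s *\<^sub>R N s) + e' *\<^sub>R B s)"
  have "((\<lambda>x. a x *\<^sub>R T x + b x *\<^sub>R N x + e x *\<^sub>R B x) has_vector_derivative ?V') (at s)"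
    using assms(1,3-5) by (intro has_vector_derivative_add has_vector_derivative_scaleR
        tangent_has_derivative normal_has_derivative binormal_has_derivative)
  then have "(V has_vector_derivative ?V') (at s)"
    by (rule has_vector_derivative_transform_within_open[OF _ open_I assms(1)]) (simp add: V)
  then have "covD \<rho> \<gamma> V s = ?V' + (\<rho> * a s) *\<^sub>R \<gamma> s"
    using covD_eq[of V ?V' s] V[OF assms(1)] frenet_at[OF assms(1)] by simp
  then show ?thesis
    by (simp add: algebra_simps)
qed

lemma curve_amb_self: "s \<in> I \<Longrightarrow> \<rho> \<noteq> 0 \<Longrightarrow> amb \<rho> (\<gamma> s) (\<gamma> s) = 1 / \<rho>"
  using unit_speed unfolding unit_speed_curve_in_def space_form_def by (auto split: if_splits)

lemma curve_amb_covT: "s \<in> I \<Longrightarrow> \<rho> * amb \<rho> (\<gamma> s) (covT \<rho> \<gamma> k s) = 0"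
proof (cases "\<rho> = 0")
  case False
  show "s \<in> I \<Longrightarrow> ?thesis"
  proof (induction k arbitrary: s)
    case 0
    have "((\<lambda>x. amb \<rho> (\<gamma> x) (\<gamma> x)) has_real_derivative amb \<rho> (\<gamma> s) (T s) + amb \<rho> (T s) (\<gamma> s)) (at s)"
      using curve_has_derivative[OF 0] curve_has_derivative[OF 0] by (rule amb_has_real_derivative)
    then have "amb \<rho> (\<gamma> s) (T s) + amb \<rho> (T s) (\<gamma> s) = 0"
      by (rule DERIV_const_on_open[OF open_I 0, where c = "1 / \<rho>", rotated])
        (simp add: curve_amb_self False)
    then show ?case
      by (simp add: amb_commute)
  next
    case (Suc k)
    let ?V = "covT \<rho> \<gamma> k"
    have "((\<lambda>x. amb \<rho> (\<gamma> x) (?V x)) has_real_derivative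
        amb \<rho> (\<gamma> s) (vector_derivative ?V (at s)) + amb \<rho> (T s) (?V s)) (at s)"
      using curve_has_derivative[OF Suc.prems] covT_has_derivative[OF Suc.prems]
      by (rule amb_has_real_derivative)
    then have "amb \<rho> (\<gamma> s) (vector_derivative ?V (at s)) + amb \<rho> (T s) (?V s) = 0"
      by (rule DERIV_const_on_open[OF open_I Suc.prems, where c = 0, rotated])
        (use Suc.IH False in simp)
    moreover have "amb \<rho> (\<gamma> s) (covT \<rho> \<gamma> (Suc k) s) = amb \<rho> (\<gamma> s) (vector_derivative ?V (at s))
        + \<rho> * amb \<rho> (T s) (?V s) * amb \<rho> (\<gamma> s) (\<gamma> s)"
      by (simp add: covD_def tangent_def)
    ultimately show ?case
      using curve_amb_self[OF Suc.prems False] False by simp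
  qed
qed simp

lemma curvature_ntimes_differentiable: "ntimes_differentiable_on n I \<kappa>"
proof -
  have square: "amb \<rho> (covD \<rho> \<gamma> T s) (covD \<rho> \<gamma> T s) = (\<kappa> s)\<^sup>2" if "s \<in> I" for s
    using frenet_at[OF that] by (simp add: power2_eq_square)
  have "ntimes_differentiable_on n I (\<lambda>s. sqrt (amb \<rho> (covT \<rho> \<gamma> 1 s) (covT \<rho> \<gamma> 1 s)))"
    by (rule ntimes_differentiable_on_sqrt[OF ntimes_differentiable_on_amb
          [OF covT_ntimes_differentiable covT_ntimes_differentiable]])
      (auto simp: square dest: frenet_at(3))
  then show ?thesis
    by (rule ntimes_differentiable_on_cong[OF open_I, rotated])
      (simp add: square frenet_at(3) less_imp_le)
qed

lemma curvature_derivatives: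
  obtains \<kappa>1 \<kappa>2 \<kappa>3 \<kappa>4 where
    "\<And>x. x \<in> I \<Longrightarrow> (\<kappa> has_real_derivative \<kappa>1 x) (at x)"
    "\<And>x. x \<in> I \<Longrightarrow> (\<kappa>1 has_real_derivative \<kappa>2 x) (at x)"
    "\<And>x. x \<in> I \<Longrightarrow> (\<kappa>2 has_real_derivative \<kappa>3 x) (at x)"
    "\<And>x. x \<in> I \<Longrightarrow> (\<kappa>3 has_real_derivative \<kappa>4 x) (at x)"
proof -
  obtain \<kappa>1 where d1: "\<forall>x\<in>I. (\<kappa> has_real_derivative \<kappa>1 x) (at x)"
    and D1: "ntimes_differentiable_on (Suc (Suc (Suc 0))) I \<kappa>1"
    using curvature_ntimes_differentiable by (rule ntimes_differentiable_on_realE)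
  obtain \<kappa>2 where d2: "\<forall>x\<in>I. (\<kappa>1 has_real_derivative \<kappa>2 x) (at x)"
    and D2: "ntimes_differentiable_on (Suc (Suc 0)) I \<kappa>2"
    using D1 by (rule ntimes_differentiable_on_realE)
  obtain \<kappa>3 where d3: "\<forall>x\<in>I. (\<kappa>2 has_real_derivative \<kappa>3 x) (at x)"
    and D3: "ntimes_differentiable_on (Suc 0) I \<kappa>3"
    using D2 by (rule ntimes_differentiable_on_realE)
  obtain \<kappa>4 where d4: "\<forall>x\<in>I. (\<kappa>3 has_real_derivative \<kappa>4 x) (at x)"
    using D3 by (rule ntimes_differentiable_on_realE)
  show ?thesis
    by (rule that) (use d1 d2 d3 d4 in blast)+
qed

end

section \<open>Constant curvature implies constant torsion\<close>

context frenet_curve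
begin

abbreviation "G \<equiv> covT_gram \<rho> \<gamma>"

text \<open>Metric compatibility of the covariant derivative: the correction term of covD is a
  multiple of the position vector, which is orthogonal to every covT k.\<close>
lemma covT_gram_has_derivative:
  assumes "s \<in> I"
  shows "(G i j has_real_derivative G (Suc i) j s + G i (Suc j) s) (at s)"
proof -
  have "(G i j has_real_derivative amb \<rho> (covT \<rho> \<gamma> i s) (vector_derivative (covT \<rho> \<gamma> j) (at s))
      + amb \<rho> (vector_derivative (covT \<rho> \<gamma> i) (at s)) (covT \<rho> \<gamma> j s)) (at s)"
    unfolding covT_gram_def[abs_def]
    using covT_has_derivative[OF assms] covT_has_derivative[OF assms] by (rule amb_has_real_derivative)
  moreover have "G (Suc i) j s + G i (Suc j) s =
      amb \<rho> (covT \<rho> \<gamma> i s) (vector_derivative (covT \<rho> \<gamma> j) (at s))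
      + amb \<rho> (vector_derivative (covT \<rho> \<gamma> i) (at s)) (covT \<rho> \<gamma> j s)
      + amb \<rho> (T s) (covT \<rho> \<gamma> i s) * (\<rho> * amb \<rho> (\<gamma> s) (covT \<rho> \<gamma> j s))
      + amb \<rho> (T s) (covT \<rho> \<gamma> j s) * (\<rho> * amb \<rho> (\<gamma> s) (covT \<rho> \<gamma> i s))"
    by (simp add: covT_gram_def covD_def tangent_def amb_commute[of \<rho> _ "\<gamma> s"] algebra_simps)
  ultimately show ?thesis
    by (simp add: curve_amb_covT[OF assms])
qed

lemma covT_gram_const_imp:
  assumes "\<And>y. y \<in> I \<Longrightarrow> G i j y = C" "s \<in> I"
  shows "G (Suc i) j s + G i (Suc j) s = 0"
  using covT_gram_has_derivative[OF assms(2)]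
  by (rule DERIV_const_on_open[OF open_I assms(2), where c = C, rotated]) (simp add: assms(1))

lemma triharmonic_covT_gram_0_5:
  assumes "triharmonic_on \<rho> I \<gamma>" "s \<in> I"
  shows "G 0 5 s = 0"
proof -
  have "G 0 5 s = amb \<rho> (covT \<rho> \<gamma> 5 s
      + curvR \<rho> (covT \<rho> \<gamma> 3 s) (covT \<rho> \<gamma> 0 s) (covT \<rho> \<gamma> 0 s)
      - curvR \<rho> (covT \<rho> \<gamma> 2 s) (covT \<rho> \<gamma> 1 s) (covT \<rho> \<gamma> 0 s)) (covT \<rho> \<gamma> 0 s)"
    unfolding curvR_def covT_gram_def by (simp add: algebra_simps amb_commute)
  also have "\<dots> = 0"
    using assms unfolding triharmonic_on_def by (simp only: amb_zero_left)
  finally show ?thesis .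
qed

lemma covT_gram_combination_imp:
  assumes "\<And>y. y \<in> I \<Longrightarrow> G i j y + a * G i' j' y = C" "s \<in> I"
  shows "G (Suc i) j s + G i (Suc j) s + a * (G (Suc i') j' s + G i' (Suc j') s) = 0"
proof -
  have "((\<lambda>y. G i j y + a * G i' j' y) has_real_derivative
      G (Suc i) j s + G i (Suc j) s + a * (G (Suc i') j' s + G i' (Suc j') s)) (at s)"
    using covT_gram_has_derivative[OF assms(2)]
      DERIV_cmult[OF covT_gram_has_derivative[OF assms(2)]] by (rule DERIV_add)
  then show ?thesis
    by (rule DERIV_const_on_open[OF open_I assms(2), where c = C, rotated]) (simp add: assms(1))
qed

lemma constant_curvature_covT_gram_0_5:
  assumes curvature_const: "\<And>y. y \<in> I \<Longrightarrow> \<kappa> y = k" and "s \<in> I"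
  shows "G 0 5 s = 5 * G 2 3 s"
proof -
  have G00: "G 0 0 y = 1" if "y \<in> I" for y
    using frenet_at[OF that] by (simp add: covT_gram_def)
  have G11: "G 1 1 y = k\<^sup>2" if "y \<in> I" for y
    using frenet_at[OF that] curvature_const[OF that] by (simp add: covT_gram_def power2_eq_square)
  have G01: "G 0 1 y = 0" if "y \<in> I" for y
    using covT_gram_const_imp[OF G00 that] covT_gram_commute[of \<rho> \<gamma> 1 0]
    by (simp add: eval_nat_numeral)
  have G12: "G 1 2 y = 0" if "y \<in> I" for y
    using covT_gram_const_imp[OF G11 that] covT_gram_commute[of \<rho> \<gamma> 2 1]
    by (simp add: eval_nat_numeral)
  have G02: "G 0 2 y = - k\<^sup>2" if "y \<in> I" for y
    using covT_gram_const_imp[OF G01 that] G11[OF that] by (simp add: eval_nat_numeral)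
  have G03: "G 0 3 y = 0" if "y \<in> I" for y
    using covT_gram_const_imp[OF G02 that] G12[OF that] by (simp add: eval_nat_numeral)
  have G13: "G 1 3 y + G 2 2 y = 0" if "y \<in> I" for y
    using covT_gram_const_imp[OF G12 that] by (simp add: eval_nat_numeral)
  have G04: "G 0 4 y - G 2 2 y = 0" if "y \<in> I" for y
    using covT_gram_const_imp[OF G03 that] G13[OF that] by (simp add: eval_nat_numeral)
  have "G 1 4 s = - 3 * G 2 3 s"
    using covT_gram_combination_imp[of 1 3 1 2 2 0, OF _ \<open>s \<in> I\<close>] G13
      covT_gram_commute[of \<rho> \<gamma> 3 2 s]
    by (simp add: eval_nat_numeral)
  then show ?thesis
    using covT_gram_combination_imp[of 0 4 "-1" 2 2 0, OF _ \<open>s \<in> I\<close>] G04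
      covT_gram_commute[of \<rho> \<gamma> 3 2 s]
    by (simp add: eval_nat_numeral)
qed

lemma constant_curvature_covT_2:
  assumes curvature_const: "\<And>y. y \<in> I \<Longrightarrow> \<kappa> y = k" and "s \<in> I"
  shows "covT \<rho> \<gamma> 2 s = k *\<^sub>R (- k *\<^sub>R T s + \<tau> s *\<^sub>R B s)"
proof -
  have curvature_vector: "covD \<rho> \<gamma> T y = k *\<^sub>R N y" if "y \<in> I" for y
    using frenet_at[OF that] curvature_const[OF that] by simp
  have "((\<lambda>y. k *\<^sub>R N y) has_vector_derivative k *\<^sub>R (- \<kappa> s *\<^sub>R T s + \<tau> s *\<^sub>R B s)) (at s)"
    using normal_has_derivative[OF assms(2)]
    by (rule bounded_linear.has_vector_derivative[OF bounded_linear_scaleR_right])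
  then have "(covT \<rho> \<gamma> 1 has_vector_derivative k *\<^sub>R (- \<kappa> s *\<^sub>R T s + \<tau> s *\<^sub>R B s)) (at s)"
    by (rule has_vector_derivative_transform_within_open[OF _ open_I assms(2)]) (simp add: curvature_vector)
  then have "covT \<rho> \<gamma> 2 s = k *\<^sub>R (- \<kappa> s *\<^sub>R T s + \<tau> s *\<^sub>R B s)
      + (\<rho> * amb \<rho> (T s) (covT \<rho> \<gamma> 1 s)) *\<^sub>R \<gamma> s"
    using covD_eq by (simp add: numeral_2_eq_2)
  then show ?thesis
    using curvature_vector[OF assms(2)] frenet_at[OF assms(2)] curvature_const[OF assms(2)] by simp
qed

lemma triharmonic_constant_curvature_covT_gram_2_2:
  assumes "triharmonic_on \<rho> I \<gamma>" and curvature_const: "\<And>y. y \<in> I \<Longrightarrow> \<kappa> y = k"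
  obtains C where "\<And>s. s \<in> I \<Longrightarrow> G 2 2 s = C"
proof -
  have "G 2 3 s = 0" if "s \<in> I" for s
    using triharmonic_covT_gram_0_5[OF assms(1) that]
      constant_curvature_covT_gram_0_5[OF curvature_const that] by simp
  then have "(G 2 2 has_real_derivative 0) (at s within I)" if "s \<in> I" for s
    using covT_gram_has_derivative[OF that, of 2 2] covT_gram_commute[of \<rho> \<gamma> 3 2 s] that
    by (simp add: has_field_derivative_at_within)
  moreover have "convex I"
    using interval_I by (simp add: is_interval_convex)
  ultimately have "\<exists>C. \<forall>s\<in>I. G 2 2 s = C"
    by (intro has_field_derivative_zero_constant) auto
  then show ?thesis
    using that by blast
qed

lemma constant_curvature_torsion_continuous:
  assumes curvature_const: "\<And>y. y \<in> I \<Longrightarrow> \<kappa> y = k" and "k > 0"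
  shows "continuous_on I \<tau>"
proof -
  have "continuous_on I (\<lambda>s. amb \<rho> (covT \<rho> \<gamma> 2 s) (B s) / k)"
  proof (intro continuous_at_imp_continuous_on ballI)
    fix s assume "s \<in> I"
    have "isCont (covT \<rho> \<gamma> 2) s"
      using covT_has_derivative[OF \<open>s \<in> I\<close>] has_vector_derivative_continuous by blast
    moreover have "isCont B s"
      using frenet_at(2)[OF \<open>s \<in> I\<close>] differentiable_imp_continuous_within by blast
    ultimately have "isCont (\<lambda>s. amb \<rho> (covT \<rho> \<gamma> 2 s) (B s)) s"
      by (rule bounded_bilinear.continuous[OF bounded_bilinear_amb])
    then show "isCont (\<lambda>s. amb \<rho> (covT \<rho> \<gamma> 2 s) (B s) / k) s"
      using \<open>k > 0\<close> by (intro continuous_intros) auto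
  qed
  moreover have torsion_eq: "\<tau> s = amb \<rho> (covT \<rho> \<gamma> 2 s) (B s) / k" if "s \<in> I" for s
    using constant_curvature_covT_2[OF curvature_const that] frenet_at[OF that] \<open>k > 0\<close> by simp
  ultimately show ?thesis
    by (subst continuous_on_cong[OF refl torsion_eq])
qed

lemma constant_torsion_if_constant_curvature:
  assumes "triharmonic_on \<rho> I \<gamma>" and curvature_const: "\<And>y. y \<in> I \<Longrightarrow> \<kappa> y = k"
  shows "\<exists>c. \<forall>s\<in>I. \<tau> s = c"
proof (cases "I = {}")
  case False
  then have "k > 0"
    using frenet_at(3) curvature_const by force
  obtain C where C: "\<And>s. s \<in> I \<Longrightarrow> G 2 2 s = C"
    using triharmonic_constant_curvature_covT_gram_2_2[OF assms] by blast
  have "poly [:k\<^sup>2 - C / k\<^sup>2, 0, 1:] (\<tau> s) = 0" if "s \<in> I" for s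
  proof -
    have "C = k\<^sup>2 * (k\<^sup>2 + (\<tau> s)\<^sup>2)"
      using C[OF that] constant_curvature_covT_2[OF curvature_const that] frenet_at[OF that]
      by (simp add: covT_gram_def algebra_simps power2_eq_square)
    then show ?thesis
      using \<open>k > 0\<close> by (simp add: field_simps power2_eq_square)
  qed
  moreover have "[:k\<^sup>2 - C / k\<^sup>2, 0, 1:] \<noteq> 0"
    by simp
  ultimately show ?thesis
    using continuous_poly_root_on_connected_imp_const[OF is_interval_connected[OF interval_I]
        constant_curvature_torsion_continuous[OF curvature_const \<open>k > 0\<close>]]
    by blast
qed simp

end

section \<open>Constant torsion implies constant curvature\<close>

locale const_torsion_frenet_curve = frenet_curve +
  fixes c :: real and \<kappa>1 \<kappa>2 \<kappa>3 \<kappa>4 :: "real \<Rightarrow> real"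
  assumes torsion_const: "\<And>x. x \<in> I \<Longrightarrow> \<tau> x = c"
    and deriv1: "\<And>x. x \<in> I \<Longrightarrow> (\<kappa> has_real_derivative \<kappa>1 x) (at x)"
    and deriv2: "\<And>x. x \<in> I \<Longrightarrow> (\<kappa>1 has_real_derivative \<kappa>2 x) (at x)"
    and deriv3: "\<And>x. x \<in> I \<Longrightarrow> (\<kappa>2 has_real_derivative \<kappa>3 x) (at x)"
    and deriv4: "\<And>x. x \<in> I \<Longrightarrow> (\<kappa>3 has_real_derivative \<kappa>4 x) (at x)"
begin

lemmas derivs = deriv1 deriv2 deriv3 deriv4

lemma covT_Suc_frame:
  assumes "\<And>y. y \<in> I \<Longrightarrow> covT \<rho> \<gamma> k y = a y *\<^sub>R T y + b y *\<^sub>R N y + e y *\<^sub>R B y"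
    and "\<And>y. y \<in> I \<Longrightarrow> (a has_real_derivative a' y) (at y)"
    and "\<And>y. y \<in> I \<Longrightarrow> (b has_real_derivative b' y) (at y)"
    and "\<And>y. y \<in> I \<Longrightarrow> (e has_real_derivative e' y) (at y)"
    and "\<And>y. y \<in> I \<Longrightarrow> a2 y = a' y - \<kappa> y * b y"
    and "\<And>y. y \<in> I \<Longrightarrow> b2 y = b' y + \<kappa> y * a y - c * e y"
    and "\<And>y. y \<in> I \<Longrightarrow> e2 y = e' y + c * b y"
    and "k' = Suc k" "x \<in> I"
  shows "covT \<rho> \<gamma> k' x = a2 x *\<^sub>R T x + b2 x *\<^sub>R N x + e2 x *\<^sub>R B x"
  using covD_frame[OF assms(9,1) assms(2-4)[OF assms(9)]] assms(5-9) torsion_const[OF assms(9)]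
  by simp

lemma covT_1: "x \<in> I \<Longrightarrow> covT \<rho> \<gamma> 1 x = 0 *\<^sub>R T x + \<kappa> x *\<^sub>R N x + 0 *\<^sub>R B x"
  using frenet_at by simp

lemma covT_2:
  "x \<in> I \<Longrightarrow> covT \<rho> \<gamma> 2 x = (- (\<kappa> x)\<^sup>2) *\<^sub>R T x + \<kappa>1 x *\<^sub>R N x + (c * \<kappa> x) *\<^sub>R B x"
  by (rule covT_Suc_frame[OF covT_1, where a' = "\<lambda>_. 0" and b' = \<kappa>1 and e' = "\<lambda>_. 0"])
    (auto intro!: derivative_eq_intros derivs simp: power2_eq_square)

lemma covT_3:
  "x \<in> I \<Longrightarrow> covT \<rho> \<gamma> 3 x =
    (- 3 * \<kappa> x * \<kappa>1 x) *\<^sub>R T x + (\<kappa>2 x - \<kappa> x ^ 3 - c\<^sup>2 * \<kappa> x) *\<^sub>R N x + (2 * c * \<kappa>1 x) *\<^sub>R B x"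
  by (rule covT_Suc_frame[OF covT_2,
        where a' = "\<lambda>y. - 2 * \<kappa> y * \<kappa>1 y" and b' = \<kappa>2 and e' = "\<lambda>y. c * \<kappa>1 y"])
    (auto intro!: derivative_eq_intros derivs simp: algebra_simps power2_eq_square power3_eq_cube)

lemma covT_4:
  "x \<in> I \<Longrightarrow> covT \<rho> \<gamma> 4 x =
    (- 3 * (\<kappa>1 x)\<^sup>2 - 4 * \<kappa> x * \<kappa>2 x + \<kappa> x ^ 4 + c\<^sup>2 * (\<kappa> x)\<^sup>2) *\<^sub>R T x
    + (\<kappa>3 x - 6 * (\<kappa> x)\<^sup>2 * \<kappa>1 x - 3 * c\<^sup>2 * \<kappa>1 x) *\<^sub>R N x
    + (3 * c * \<kappa>2 x - c * \<kappa> x ^ 3 - c ^ 3 * \<kappa> x) *\<^sub>R B x"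
  by (rule covT_Suc_frame[OF covT_3,
        where a' = "\<lambda>y. - 3 * (\<kappa>1 y)\<^sup>2 - 3 * \<kappa> y * \<kappa>2 y"
          and b' = "\<lambda>y. \<kappa>3 y - 3 * (\<kappa> y)\<^sup>2 * \<kappa>1 y - c\<^sup>2 * \<kappa>1 y" and e' = "\<lambda>y. 2 * c * \<kappa>2 y"])
    (auto intro!: derivative_eq_intros derivs simp: algebra_simps eval_nat_numeral)

lemma covT_5:
  "x \<in> I \<Longrightarrow> covT \<rho> \<gamma> 5 x =
    (- 10 * \<kappa>1 x * \<kappa>2 x - 5 * \<kappa> x * \<kappa>3 x + 10 * \<kappa> x ^ 3 * \<kappa>1 x + 5 * c\<^sup>2 * \<kappa> x * \<kappa>1 x) *\<^sub>R T x
    + (\<kappa>4 x - 15 * \<kappa> x * (\<kappa>1 x)\<^sup>2 - 10 * (\<kappa> x)\<^sup>2 * \<kappa>2 x - 6 * c\<^sup>2 * \<kappa>2 x + \<kappa> x ^ 5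
       + 2 * c\<^sup>2 * \<kappa> x ^ 3 + c ^ 4 * \<kappa> x) *\<^sub>R N x
    + (4 * c * \<kappa>3 x - 9 * c * (\<kappa> x)\<^sup>2 * \<kappa>1 x - 4 * c ^ 3 * \<kappa>1 x) *\<^sub>R B x"
  by (rule covT_Suc_frame[OF covT_4,
        where a' = "\<lambda>y. - 10 * \<kappa>1 y * \<kappa>2 y - 4 * \<kappa> y * \<kappa>3 y + 4 * \<kappa> y ^ 3 * \<kappa>1 y
                         + 2 * c\<^sup>2 * \<kappa> y * \<kappa>1 y"
          and b' = "\<lambda>y. \<kappa>4 y - 12 * \<kappa> y * (\<kappa>1 y)\<^sup>2 - 6 * (\<kappa> y)\<^sup>2 * \<kappa>2 y - 3 * c\<^sup>2 * \<kappa>2 y"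
          and e' = "\<lambda>y. 3 * c * \<kappa>3 y - 3 * c * (\<kappa> y)\<^sup>2 * \<kappa>1 y - c ^ 3 * \<kappa>1 y"])
    (auto intro!: derivative_eq_intros derivs simp: algebra_simps eval_nat_numeral)

lemma triharmonic_curvature_ODE:
  assumes "triharmonic_on \<rho> I \<gamma>"
  shows "triharmonic_curvature_ODE I \<rho> c \<kappa> \<kappa>1 \<kappa>2 \<kappa>3 \<kappa>4"
proof -
  have components:
    "2 * \<kappa>1 x * \<kappa>2 x + \<kappa> x * \<kappa>3 x - c\<^sup>2 * \<kappa> x * \<kappa>1 x - 2 * \<kappa> x ^ 3 * \<kappa>1 x = 0 \<and>
     \<kappa>4 x - 6 * c\<^sup>2 * \<kappa>2 x + c^4 * \<kappa> x - 15 * \<kappa> x * (\<kappa>1 x)\<^sup>2 - 10 * (\<kappa> x)\<^sup>2 * \<kappa>2 x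
      + 2 * c\<^sup>2 * \<kappa> x ^ 3 + \<kappa> x ^ 5 + \<rho> * (\<kappa>2 x - c\<^sup>2 * \<kappa> x - 2 * \<kappa> x ^ 3) = 0 \<and>
     c * (4 * \<kappa>3 x - 4 * c\<^sup>2 * \<kappa>1 x - 9 * (\<kappa> x)\<^sup>2 * \<kappa>1 x + 2 * \<rho> * \<kappa>1 x) = 0"
    if x: "x \<in> I" for x
  proof -
    define E where "E = covT \<rho> \<gamma> 5 x
      + curvR \<rho> (covT \<rho> \<gamma> 3 x) (covT \<rho> \<gamma> 0 x) (covT \<rho> \<gamma> 0 x)
      - curvR \<rho> (covT \<rho> \<gamma> 2 x) (covT \<rho> \<gamma> 1 x) (covT \<rho> \<gamma> 0 x)"
    have "E = 0"
      using assms x unfolding triharmonic_on_def E_def by blast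
    moreover have
      "amb \<rho> E (T x) = - 5 * (2 * \<kappa>1 x * \<kappa>2 x + \<kappa> x * \<kappa>3 x - c\<^sup>2 * \<kappa> x * \<kappa>1 x - 2 * \<kappa> x ^ 3 * \<kappa>1 x)"
      "amb \<rho> E (N x) = \<kappa>4 x - 6 * c\<^sup>2 * \<kappa>2 x + c^4 * \<kappa> x - 15 * \<kappa> x * (\<kappa>1 x)\<^sup>2
        - 10 * (\<kappa> x)\<^sup>2 * \<kappa>2 x + 2 * c\<^sup>2 * \<kappa> x ^ 3 + \<kappa> x ^ 5 + \<rho> * (\<kappa>2 x - c\<^sup>2 * \<kappa> x - 2 * \<kappa> x ^ 3)"
      "amb \<rho> E (B x) = c * (4 * \<kappa>3 x - 4 * c\<^sup>2 * \<kappa>1 x - 9 * (\<kappa> x)\<^sup>2 * \<kappa>1 x + 2 * \<rho> * \<kappa>1 x)"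
      unfolding E_def curvR_def covT_5[OF x] covT_3[OF x] covT_2[OF x] covT_1[OF x] covT.simps(1)
      by (simp_all add: frenet_at[OF x]) algebra+
    ultimately show ?thesis
      by simp
  qed
  show ?thesis
    by unfold_locales (use open_I interval_I frenet_at(3) derivs components in auto)
qed

end

context frenet_curve
begin

lemma constant_curvature_if_constant_torsion:
  assumes "triharmonic_on \<rho> I \<gamma>" and torsion_const: "\<And>x. x \<in> I \<Longrightarrow> \<tau> x = c"
  shows "\<exists>k. \<forall>x\<in>I. \<kappa> x = k"
proof -
  obtain \<kappa>1 \<kappa>2 \<kappa>3 \<kappa>4 where derivatives:
    "\<And>x. x \<in> I \<Longrightarrow> (\<kappa> has_real_derivative \<kappa>1 x) (at x)"
    "\<And>x. x \<in> I \<Longrightarrow> (\<kappa>1 has_real_derivative \<kappa>2 x) (at x)"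
    "\<And>x. x \<in> I \<Longrightarrow> (\<kappa>2 has_real_derivative \<kappa>3 x) (at x)"
    "\<And>x. x \<in> I \<Longrightarrow> (\<kappa>3 has_real_derivative \<kappa>4 x) (at x)"
    using curvature_derivatives by blast
  interpret const_torsion_frenet_curve \<rho> I \<gamma> \<kappa> \<tau> N B c \<kappa>1 \<kappa>2 \<kappa>3 \<kappa>4
    using torsion_const derivatives by unfold_locales
  interpret triharmonic_curvature_ODE I \<rho> c \<kappa> \<kappa>1 \<kappa>2 \<kappa>3 \<kappa>4
    by (rule triharmonic_curvature_ODE[OF assms(1)])
  show ?thesis
    by (rule curvature_constant)
qed

end

theorem proposition4p3:
  fixes \<rho> :: real and I :: "real set" and \<gamma> :: "real \<Rightarrow> real^4"
    and \<kappa> \<tau> :: "real \<Rightarrow> real" and N B :: "real \<Rightarrow> real^4"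
  assumes "open I" and "is_interval I" and "I \<noteq> {}"
    and "unit_speed_curve_in \<rho> I \<gamma>"
    and "frenet_on \<rho> I \<gamma> \<kappa> \<tau> N B"
    and "proper_triharmonic_on \<rho> I \<gamma>"
  shows "(\<exists>c. \<forall>s\<in>I. \<kappa> s = c) \<longleftrightarrow> (\<exists>c. \<forall>s\<in>I. \<tau> s = c)"
proof -
  interpret frenet_curve \<rho> I \<gamma> \<kappa> \<tau> N B
    using assms(1,2,4,5) by unfold_locales
  have triharmonic: "triharmonic_on \<rho> I \<gamma>"
    using assms(6) unfolding proper_triharmonic_on_def by blast
  show ?thesis
    using constant_torsion_if_constant_curvature[OF triharmonic]
      constant_curvature_if_constant_torsion[OF triharmonic] by blast
qed

end
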